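(* Let $W$ be a binary MAC with 2 users, let $X[1],X[2]$ be i.i.d. uniform on $\mathbb{F}_2$ and let $Y$ be the output of $W$ on input $(X[1],X[2])$. Consider the triples $$I=\big(I(X[1];Y,X[2]),\,I(X[2];Y,X[1]),\,I(X[1],X[2];Y)\big),\qquad J=\big(I(X[1];Y),\,I(X[2];Y),\,I(X[1]+X[2];Y)\big).$$ If all entries of $I$ are integers, then all entries of $J$ lie in $\{0,1\}$ and $J$ is uniquely determined by $I$ (any two such MACs with the same integer triple $I$ have the same $J$). Conversely, if all entries of $J$ lie in $\{0,1\}$, then all entries of $I$ are integers and $I$ is uniquely determined by $J$.
   Context: A binary MAC with 2 users is a channel $W$ with input alphabet $\mathbb{F}_2^2$ and finite output alphabet. Mutual information is in bits; $X[1]+X[2]$ is addition in $\mathbb{F}_2$. *)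

theory Defs
  imports Complex_Main
begin

text \<open>A binary MAC with 2 users: input alphabet F_2^2 (F_2 modelled by bool, with
addition in F_2 being exclusive or, i.e. a + b = (a \<noteq> b)), finite output alphabet 'y.
W x1 x2 y is the transition probability W(y | x1, x2).\<close>

definition is_binary_mac :: "(bool \<Rightarrow> bool \<Rightarrow> 'y::finite \<Rightarrow> real) \<Rightarrow> bool" where
  "is_binary_mac W \<longleftrightarrow> (\<forall>a b y. 0 \<le> W a b y) \<and> (\<forall>a b. (\<Sum>y\<in>UNIV. W a b y) = 1)"

definition mac_joint :: "(bool \<Rightarrow> bool \<Rightarrow> 'y::finite \<Rightarrow> real) \<Rightarrow> bool \<times> bool \<times> 'y \<Rightarrow> real" where
  "mac_joint W z = W (fst z) (fst (snd z)) (snd (snd z)) / 4"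

definition mutual_info :: "('z::finite \<Rightarrow> real) \<Rightarrow> ('z \<Rightarrow> 'a) \<Rightarrow> ('z \<Rightarrow> 'b) \<Rightarrow> real" where
  "mutual_info P f g =
     (\<Sum>a\<in>f ` UNIV. \<Sum>b\<in>g ` UNIV.
        (let pab = (\<Sum>z | f z = a \<and> g z = b. P z);
             pa = (\<Sum>z | f z = a. P z);
             pb = (\<Sum>z | g z = b. P z)
         in if pab > 0 then pab * log 2 (pab / (pa * pb)) else 0))"

definition X1 :: "bool \<times> bool \<times> 'y \<Rightarrow> bool" where "X1 z = fst z"
definition X2 :: "bool \<times> bool \<times> 'y \<Rightarrow> bool" where "X2 z = fst (snd z)"
definition Yout :: "bool \<times> bool \<times> 'y \<Rightarrow> 'y" where "Yout z = snd (snd z)"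

definition I_triple :: "(bool \<Rightarrow> bool \<Rightarrow> 'y::finite \<Rightarrow> real) \<Rightarrow> real \<times> real \<times> real" where
  "I_triple W =
    (mutual_info (mac_joint W) X1 (\<lambda>z. (Yout z, X2 z)),
     mutual_info (mac_joint W) X2 (\<lambda>z. (Yout z, X1 z)),
     mutual_info (mac_joint W) (\<lambda>z. (X1 z, X2 z)) Yout)"

definition J_triple :: "(bool \<Rightarrow> bool \<Rightarrow> 'y::finite \<Rightarrow> real) \<Rightarrow> real \<times> real \<times> real" where
  "J_triple W =
    (mutual_info (mac_joint W) X1 Yout,
     mutual_info (mac_joint W) X2 Yout,
     mutual_info (mac_joint W) (\<lambda>z. X1 z \<noteq> X2 z) Yout)"

definition triple_in :: "real set \<Rightarrow> real \<times> real \<times> real \<Rightarrow> bool" where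
  "triple_in S t \<longleftrightarrow> fst t \<in> S \<and> fst (snd t) \<in> S \<and> snd (snd t) \<in> S"

end

theory Submission
  imports Defs
begin

text \<open>
  For an output y write p for the joint masses of (X1, X2) together with y.  The five conditional
  entropies H(X1 | Y, X2), H(X2 | Y, X1), H(X1 | Y), H(X2 | Y) and H(X1 + X2 | Y) are sums over y of
  weighted binary entropies, each between 0 and the mass of y; so they lie in [0, 1], and they equal
  0 (resp. 1) iff on every output the two masses of each split have a vanishing member (resp. are equal).
  In these terms I = (1 - H(X1 | Y, X2), 1 - H(X2 | Y, X1), 2 - H(X1 | Y) - H(X2 | Y, X1)) and
  J = (1 - H(X1 | Y), 1 - H(X2 | Y), 1 - H(X1 + X2 | Y)).

  If I is integral, then H(X1 | Y, X2), H(X2 | Y, X1) and H(X1 | Y) are 0 or 1, the chain rule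
  H(X1 | Y) + H(X2 | Y, X1) = H(X2 | Y) + H(X1 | Y, X2) gives the same for H(X2 | Y), and outputwise
  H(X1 + X2 | Y) is the larger of H(X1 | Y, X2) and H(X2 | Y, X1); so J is {0, 1}-valued.
  If J is {0, 1}-valued, the outputwise conditions force H(X1 | Y, X2) = H(X1 | Y) H(X1 + X2 | Y) and
  H(X2 | Y, X1) = H(X2 | Y) H(X1 + X2 | Y), and exclude that exactly one of the three J-entropies is 1.
  Only five pairs (I, J) remain, and among them each triple determines the other.
\<close>

definition plogp :: "real \<Rightarrow> real" where
  "plogp x = x * log 2 x"

(* (s + t) times the binary entropy of s / (s + t), in bits *)
definition split_entropy :: "real \<Rightarrow> real \<Rightarrow> real" where
  "split_entropy s t = plogp (s + t) - plogp s - plogp t"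

lemma split_entropy_pos_eq:
  assumes "0 < s" "0 < t"
  shows "split_entropy s t = s * log 2 ((s + t) / s) + t * log 2 ((s + t) / t)"
  using assms by (simp add: split_entropy_def plogp_def log_divide algebra_simps)

lemma split_entropy_eq_0_iff:
  assumes "0 \<le> s" "0 \<le> t"
  shows "split_entropy s t = 0 \<longleftrightarrow> s = 0 \<or> t = 0"
proof (cases "s = 0 \<or> t = 0")
  case True
  then show ?thesis by (auto simp: split_entropy_def plogp_def)
next
  case False
  with assms have "0 < s" "0 < t" by auto
  then have "0 < s * log 2 ((s + t) / s)" "0 \<le> t * log 2 ((s + t) / t)" by simp_all
  then show ?thesis using False split_entropy_pos_eq[OF \<open>0 < s\<close> \<open>0 < t\<close>] by auto
qed

lemma split_entropy_nonneg:
  assumes "0 \<le> s" "0 \<le> t"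
  shows "0 \<le> split_entropy s t"
  using assms split_entropy_pos_eq[of s t] split_entropy_eq_0_iff[OF assms]
  by (cases "s = 0 \<or> t = 0") auto

lemma ln_mean_ratio_le:
  fixes s t :: real
  assumes "0 < s" "0 < t"
  shows "2 * s * ln ((s + t) / (2 * s)) \<le> t - s"
    and "s \<noteq> t \<Longrightarrow> 2 * s * ln ((s + t) / (2 * s)) < t - s"
proof -
  have pos: "0 < (s + t) / (2 * s)" using assms by simp
  have "2 * s * ((s + t) / (2 * s) - 1) = t - s" using assms by (simp add: field_simps)
  moreover have "2 * s * ln ((s + t) / (2 * s)) \<le> 2 * s * ((s + t) / (2 * s) - 1)"
    using ln_le_minus_one[OF pos] assms by (intro mult_left_mono) simp_all
  ultimately show "2 * s * ln ((s + t) / (2 * s)) \<le> t - s" by simp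
  assume "s \<noteq> t"
  with assms have "(s + t) / (2 * s) \<noteq> 1" by (simp add: field_simps)
  with ln_eq_minus_one[OF pos] ln_le_minus_one[OF pos]
  have "ln ((s + t) / (2 * s)) < (s + t) / (2 * s) - 1" by fastforce
  then have "2 * s * ln ((s + t) / (2 * s)) < 2 * s * ((s + t) / (2 * s) - 1)"
    using assms by (intro mult_strict_left_mono) simp_all
  with \<open>2 * s * ((s + t) / (2 * s) - 1) = t - s\<close>
  show "2 * s * ln ((s + t) / (2 * s)) < t - s" by simp
qed

lemma split_entropy_minus_sum:
  assumes "0 < s" "0 < t"
  shows "split_entropy s t - (s + t) = (s * ln ((s + t) / (2 * s)) + t * ln ((t + s) / (2 * t))) / ln 2"
proof -
  have "split_entropy s t = (s * ln ((s + t) / s) + t * ln ((s + t) / t)) / ln 2"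
    using assms by (simp add: split_entropy_pos_eq log_def add_divide_distrib)
  moreover have "ln ((s + t) / (2 * s)) = ln ((s + t) / s) - ln 2"
    and "ln ((t + s) / (2 * t)) = ln ((s + t) / t) - ln 2"
    using assms by (simp_all add: ln_div ln_mult add.commute)
  ultimately show ?thesis by (simp only:) (simp add: field_simps)
qed

lemma split_entropy_le:
  assumes "0 \<le> s" "0 \<le> t"
  shows "split_entropy s t \<le> s + t"
proof (cases "s = 0 \<or> t = 0")
  case True
  with assms show ?thesis by (auto simp: split_entropy_def plogp_def)
next
  case False
  with assms have pos: "0 < s" "0 < t" by auto
  have "s * ln ((s + t) / (2 * s)) + t * ln ((t + s) / (2 * t)) \<le> 0"
    using ln_mean_ratio_le(1)[OF pos] ln_mean_ratio_le(1)[OF pos(2,1)] by linarith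
  then have "(s * ln ((s + t) / (2 * s)) + t * ln ((t + s) / (2 * t))) / ln 2 \<le> 0"
    by (simp add: divide_nonpos_pos)
  then show ?thesis using split_entropy_minus_sum[OF pos] by linarith
qed

lemma split_entropy_eq_sum_iff:
  assumes "0 \<le> s" "0 \<le> t"
  shows "split_entropy s t = s + t \<longleftrightarrow> s = t"
proof
  assume "s = t"
  then show "split_entropy s t = s + t"
    by (cases "s = 0") (simp_all add: split_entropy_def plogp_def log_mult algebra_simps)
next
  assume full: "split_entropy s t = s + t"
  show "s = t"
  proof (rule ccontr)
    assume "s \<noteq> t"
    with full assms split_entropy_eq_0_iff[OF assms] have pos: "0 < s" "0 < t" by auto
    have "s * ln ((s + t) / (2 * s)) + t * ln ((t + s) / (2 * t)) < 0"
      using ln_mean_ratio_le(2)[OF pos \<open>s \<noteq> t\<close>] ln_mean_ratio_le(2)[OF pos(2,1)] \<open>s \<noteq> t\<close> by linarith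
    then have "(s * ln ((s + t) / (2 * s)) + t * ln ((t + s) / (2 * t))) / ln 2 < 0"
      by (simp add: divide_neg_pos)
    then show False using split_entropy_minus_sum[OF pos] full by linarith
  qed
qed

lemma sum_fibres:
  fixes P :: "'z::finite \<Rightarrow> real"
  shows "(\<Sum>b\<in>range g. \<Sum>z | f z = a \<and> g z = b. P z) = (\<Sum>z | f z = a. P z)"
  by (rule sum.group[of "{z. f z = a}" "range g" g P, simplified]) (auto intro: sum.cong)

lemma mutual_info_plogp:
  fixes P :: "'z::finite \<Rightarrow> real"
  assumes nonneg: "\<And>z. 0 \<le> P z"
  shows "mutual_info P f g =
    (\<Sum>a\<in>range f. \<Sum>b\<in>range g. plogp (\<Sum>z | f z = a \<and> g z = b. P z))
    - (\<Sum>a\<in>range f. plogp (\<Sum>z | f z = a. P z))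
    - (\<Sum>b\<in>range g. plogp (\<Sum>z | g z = b. P z))"
proof -
  define pj where "pj a b = (\<Sum>z | f z = a \<and> g z = b. P z)" for a b
  define pf where "pf a = (\<Sum>z | f z = a. P z)" for a
  define pg where "pg b = (\<Sum>z | g z = b. P z)" for b
  have marg_f: "(\<Sum>b\<in>range g. pj a b) = pf a" for a
    unfolding pj_def pf_def by (rule sum_fibres)
  have marg_g: "(\<Sum>a\<in>range f. pj a b) = pg b" for b
    unfolding pj_def pg_def using sum_fibres[where f = g and g = f and a = b] by (simp add: conj_commute)
  have bounds: "pj a b \<le> pf a" "pj a b \<le> pg b" "0 \<le> pj a b" for a b
    unfolding pj_def pf_def pg_def using nonneg by (auto intro!: sum_mono2 sum_nonneg)
  have term_eq: "(if 0 < pj a b then pj a b * log 2 (pj a b / (pf a * pg b)) else 0)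
      = plogp (pj a b) - pj a b * log 2 (pf a) - pj a b * log 2 (pg b)" for a b
  proof (cases "0 < pj a b")
    case True
    with bounds[of a b] have "0 < pf a" "0 < pg b" by linarith+
    with True show ?thesis by (simp add: plogp_def log_divide log_mult algebra_simps)
  next
    case False
    with bounds(3)[of a b] show ?thesis by (simp add: plogp_def)
  qed
  have "mutual_info P f g = (\<Sum>a\<in>range f. \<Sum>b\<in>range g.
      plogp (pj a b) - pj a b * log 2 (pf a) - pj a b * log 2 (pg b))"
    unfolding mutual_info_def Let_def pj_def[symmetric] pf_def[symmetric] pg_def[symmetric] term_eq ..
  also have "\<dots> = (\<Sum>a\<in>range f. \<Sum>b\<in>range g. plogp (pj a b))
      - (\<Sum>a\<in>range f. (\<Sum>b\<in>range g. pj a b) * log 2 (pf a))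
      - (\<Sum>b\<in>range g. (\<Sum>a\<in>range f. pj a b) * log 2 (pg b))"
    by (simp add: sum_subtractf sum_distrib_right sum.swap[of _ "range g"])
  also have "\<dots> = (\<Sum>a\<in>range f. \<Sum>b\<in>range g. plogp (pj a b))
      - (\<Sum>a\<in>range f. plogp (pf a)) - (\<Sum>b\<in>range g. plogp (pg b))"
    by (simp add: marg_f marg_g plogp_def)
  finally show ?thesis unfolding pj_def pf_def pg_def .
qed

lemma mutual_info_bool:
  fixes P :: "'z::finite \<Rightarrow> real" and f :: "'z \<Rightarrow> bool"
  assumes "\<And>z. 0 \<le> P z" and "surj f"
  shows "mutual_info P f g =
    - plogp (\<Sum>z | f z. P z) - plogp (\<Sum>z | \<not> f z. P z)
    - (\<Sum>b\<in>range g. split_entropy (\<Sum>z | f z \<and> g z = b. P z) (\<Sum>z | \<not> f z \<and> g z = b. P z))"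
proof -
  have "(\<Sum>z | g z = b. P z) = (\<Sum>z | f z \<and> g z = b. P z) + (\<Sum>z | \<not> f z \<and> g z = b. P z)" for b
    by (subst sum.union_disjoint[symmetric]) (auto intro: sum.cong)
  then show ?thesis
    unfolding mutual_info_plogp[OF assms(1)] \<open>surj f\<close>
    by (simp add: UNIV_bool split_entropy_def sum_subtractf sum.distrib)
qed

lemma plogp_half: "plogp (1 / 2) = - 1 / 2"
  by (simp add: plogp_def log_divide)

lemma plogp_quarter: "plogp (1 / 4) = - 1 / 2"
proof -
  have "log 2 (4 :: real) = log 2 (2 * 2)" by simp
  also have "\<dots> = 2" by (subst log_mult) auto
  finally show ?thesis by (simp add: plogp_def log_divide)
qed

(* p x1 x2 is the mass of (X1, X2) = (x1, x2) jointly with a fixed output y; the functions below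
   are the contributions of y to H(X1 | Y, X2), H(X2 | Y, X1), H(X1 | Y), H(X2 | Y), H(X1 + X2 | Y). *)
definition ent_X1_cond_X2 :: "(bool \<Rightarrow> bool \<Rightarrow> real) \<Rightarrow> real" where
  "ent_X1_cond_X2 p = (\<Sum>x2\<in>UNIV. split_entropy (p True x2) (p False x2))"

definition ent_X2_cond_X1 :: "(bool \<Rightarrow> bool \<Rightarrow> real) \<Rightarrow> real" where
  "ent_X2_cond_X1 p = (\<Sum>x1\<in>UNIV. split_entropy (p x1 True) (p x1 False))"

definition ent_X1 :: "(bool \<Rightarrow> bool \<Rightarrow> real) \<Rightarrow> real" where
  "ent_X1 p = split_entropy (\<Sum>x2\<in>UNIV. p True x2) (\<Sum>x2\<in>UNIV. p False x2)"

definition ent_X2 :: "(bool \<Rightarrow> bool \<Rightarrow> real) \<Rightarrow> real" where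
  "ent_X2 p = split_entropy (\<Sum>x1\<in>UNIV. p x1 True) (\<Sum>x1\<in>UNIV. p x1 False)"

definition ent_X1_plus_X2 :: "(bool \<Rightarrow> bool \<Rightarrow> real) \<Rightarrow> real" where
  "ent_X1_plus_X2 p = split_entropy (p True False + p False True) (p True True + p False False)"

definition joint_at :: "(bool \<Rightarrow> bool \<Rightarrow> 'y \<Rightarrow> real) \<Rightarrow> 'y \<Rightarrow> bool \<Rightarrow> bool \<Rightarrow> real" where
  "joint_at W y x1 x2 = W x1 x2 y / 4"

definition cond_entropy ::
    "((bool \<Rightarrow> bool \<Rightarrow> real) \<Rightarrow> real) \<Rightarrow> (bool \<Rightarrow> bool \<Rightarrow> 'y::finite \<Rightarrow> real) \<Rightarrow> real" where
  "cond_entropy h W = (\<Sum>y\<in>UNIV. h (joint_at W y))"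

lemma sum_Collect_bool_bool:
  fixes F :: "bool \<times> bool \<times> 'y::finite \<Rightarrow> real"
  shows "(\<Sum>z | Q z. F z) =
    (\<Sum>x1\<in>UNIV. \<Sum>x2\<in>UNIV. \<Sum>y\<in>UNIV. if Q (x1, x2, y) then F (x1, x2, y) else 0)"
proof -
  have "(\<Sum>z | Q z. F z) = (\<Sum>z\<in>UNIV. if Q z then F z else 0)"
    by (simp add: sum.If_cases)
  also have "\<dots> = (\<Sum>x1\<in>UNIV. \<Sum>x2y\<in>UNIV. if Q (x1, x2y) then F (x1, x2y) else 0)"
    by (simp add: sum.cartesian_product UNIV_Times_UNIV[symmetric] del: UNIV_Times_UNIV)
  also have "\<dots> = (\<Sum>x1\<in>UNIV. \<Sum>x2\<in>UNIV. \<Sum>y\<in>UNIV. if Q (x1, x2, y) then F (x1, x2, y) else 0)"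
    by (simp add: sum.cartesian_product UNIV_Times_UNIV[symmetric] del: UNIV_Times_UNIV)
  finally show ?thesis .
qed

lemma mac_mutual_info_bool:
  fixes W :: "bool \<Rightarrow> bool \<Rightarrow> 'y::finite \<Rightarrow> real" and f :: "bool \<times> bool \<times> 'y \<Rightarrow> bool"
  assumes "is_binary_mac W" and "surj f"
    and "(\<Sum>z | f z. mac_joint W z) = 1 / 2" and "(\<Sum>z | \<not> f z. mac_joint W z) = 1 / 2"
  shows "mutual_info (mac_joint W) f g = 1 - (\<Sum>b\<in>range g.
    split_entropy (\<Sum>z | f z \<and> g z = b. mac_joint W z) (\<Sum>z | \<not> f z \<and> g z = b. mac_joint W z))"
proof -
  have "0 \<le> mac_joint W z" for z
    using assms(1) by (simp add: is_binary_mac_def mac_joint_def)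
  from mutual_info_bool[of "mac_joint W", OF this assms(2)] show ?thesis
    unfolding assms(3,4) plogp_half by simp
qed

lemma mac_input_prob:
  fixes W :: "bool \<Rightarrow> bool \<Rightarrow> 'y::finite \<Rightarrow> real"
  assumes "is_binary_mac W"
  shows "(\<Sum>y\<in>UNIV. W a b y / 4) = 1 / 4"
  using assms by (simp add: is_binary_mac_def sum_divide_distrib[symmetric])

lemma mac_marginals:
  fixes W :: "bool \<Rightarrow> bool \<Rightarrow> 'y::finite \<Rightarrow> real"
  assumes "is_binary_mac W"
  shows "(\<Sum>z | X1 z. mac_joint W z) = 1 / 2" "(\<Sum>z | \<not> X1 z. mac_joint W z) = 1 / 2"
    and "(\<Sum>z | X2 z. mac_joint W z) = 1 / 2" "(\<Sum>z | \<not> X2 z. mac_joint W z) = 1 / 2"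
    and "(\<Sum>z | X1 z \<noteq> X2 z. mac_joint W z) = 1 / 2" "(\<Sum>z | \<not> X1 z \<noteq> X2 z. mac_joint W z) = 1 / 2"
  by (simp_all add: sum_Collect_bool_bool mac_joint_def X1_def X2_def UNIV_bool mac_input_prob[OF assms])

lemma J_triple_eq:
  fixes W :: "bool \<Rightarrow> bool \<Rightarrow> 'y::finite \<Rightarrow> real"
  assumes mac: "is_binary_mac W"
  shows "J_triple W =
    (1 - cond_entropy ent_X1 W, 1 - cond_entropy ent_X2 W, 1 - cond_entropy ent_X1_plus_X2 W)"
proof -
  have surj: "surj (X1 :: bool \<times> bool \<times> 'y \<Rightarrow> bool)" "surj (X2 :: bool \<times> bool \<times> 'y \<Rightarrow> bool)"
    "surj (\<lambda>z :: bool \<times> bool \<times> 'y. X1 z \<noteq> X2 z)" "surj (Yout :: bool \<times> bool \<times> 'y \<Rightarrow> 'y)"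
    by (auto simp: surj_def X1_def X2_def Yout_def)
  show ?thesis
    unfolding J_triple_def
      mac_mutual_info_bool[OF mac surj(1) mac_marginals(1,2)[OF mac]]
      mac_mutual_info_bool[OF mac surj(2) mac_marginals(3,4)[OF mac]]
      mac_mutual_info_bool[OF mac surj(3) mac_marginals(5,6)[OF mac]] surj(4)
    by (simp add: sum_Collect_bool_bool mac_joint_def UNIV_bool X1_def X2_def Yout_def
        cond_entropy_def joint_at_def ent_X1_def ent_X2_def ent_X1_plus_X2_def ac_simps)
qed

lemma I_triple_eq:
  fixes W :: "bool \<Rightarrow> bool \<Rightarrow> 'y::finite \<Rightarrow> real"
  assumes mac: "is_binary_mac W"
  shows "I_triple W =
    (1 - cond_entropy ent_X1_cond_X2 W, 1 - cond_entropy ent_X2_cond_X1 W,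
     2 - cond_entropy ent_X1 W - cond_entropy ent_X2_cond_X1 W)"
proof -
  have surj: "surj (X1 :: bool \<times> bool \<times> 'y \<Rightarrow> bool)" "surj (X2 :: bool \<times> bool \<times> 'y \<Rightarrow> bool)"
    "surj (\<lambda>z :: bool \<times> bool \<times> 'y. (Yout z, X2 z))" "surj (\<lambda>z :: bool \<times> bool \<times> 'y. (Yout z, X1 z))"
    "surj (\<lambda>z :: bool \<times> bool \<times> 'y. (X1 z, X2 z))" "surj (Yout :: bool \<times> bool \<times> 'y \<Rightarrow> 'y)"
    by (auto simp: surj_def X1_def X2_def Yout_def)
  have nonneg: "0 \<le> mac_joint W z" for z
    using mac by (simp add: is_binary_mac_def mac_joint_def)
  have UNIV_bool_pair: "(UNIV :: (bool \<times> bool) set) = {(True, True), (True, False), (False, True), (False, False)}"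
    by (auto simp: UNIV_bool)
  have sum_pairs: "(\<Sum>z\<in>UNIV. F z) = (\<Sum>y\<in>UNIV. \<Sum>b\<in>UNIV. F (y, b))"
    for F :: "'y \<times> bool \<Rightarrow> real"
    by (simp add: sum.cartesian_product UNIV_Times_UNIV[symmetric] del: UNIV_Times_UNIV)
  have "mutual_info (mac_joint W) X1 (\<lambda>z. (Yout z, X2 z)) = 1 - cond_entropy ent_X1_cond_X2 W"
    unfolding mac_mutual_info_bool[OF mac surj(1) mac_marginals(1,2)[OF mac]] surj(3) sum_pairs
      sum_Collect_bool_bool
    by (simp add: mac_joint_def UNIV_bool X1_def X2_def Yout_def cond_entropy_def joint_at_def
        ent_X1_cond_X2_def ac_simps)
  moreover have "mutual_info (mac_joint W) X2 (\<lambda>z. (Yout z, X1 z)) = 1 - cond_entropy ent_X2_cond_X1 W"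
    unfolding mac_mutual_info_bool[OF mac surj(2) mac_marginals(3,4)[OF mac]] surj(4) sum_pairs
      sum_Collect_bool_bool
    by (simp add: mac_joint_def UNIV_bool X1_def X2_def Yout_def cond_entropy_def joint_at_def
        ent_X2_cond_X1_def ac_simps)
  moreover have "mutual_info (mac_joint W) (\<lambda>z. (X1 z, X2 z)) Yout =
      (\<Sum>a\<in>UNIV. \<Sum>b\<in>UNIV. \<Sum>y\<in>UNIV. plogp (W a b y / 4)) - 4 * plogp (1 / 4)
      - (\<Sum>y\<in>UNIV. plogp (W True True y / 4 + W True False y / 4 + (W False True y / 4 + W False False y / 4)))"
    unfolding mutual_info_plogp[OF nonneg] surj(5,6) sum_Collect_bool_bool
    by (simp add: UNIV_bool_pair mac_joint_def UNIV_bool X1_def X2_def Yout_def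
        sum.distrib mac_input_prob[OF mac] ac_simps)
  moreover have "\<dots> = 2 - cond_entropy ent_X1 W - cond_entropy ent_X2_cond_X1 W"
    by (simp add: UNIV_bool plogp_quarter cond_entropy_def joint_at_def ent_X1_def ent_X2_cond_X1_def
        split_entropy_def sum.distrib sum_subtractf algebra_simps)
  ultimately show ?thesis
    unfolding I_triple_def by simp
qed

definition mass :: "(bool \<Rightarrow> bool \<Rightarrow> real) \<Rightarrow> real" where
  "mass p = (\<Sum>x1\<in>UNIV. \<Sum>x2\<in>UNIV. p x1 x2)"

lemma mass_bool: "mass p = p True True + p True False + p False True + p False False"
  by (simp add: mass_def UNIV_bool ac_simps)

lemma ent_X1_bool: "ent_X1 p = split_entropy (p True True + p True False) (p False True + p False False)"
  by (simp add: ent_X1_def UNIV_bool ac_simps)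

lemma ent_X2_bool: "ent_X2 p = split_entropy (p True True + p False True) (p True False + p False False)"
  by (simp add: ent_X2_def UNIV_bool ac_simps)

context
  fixes p :: "bool \<Rightarrow> bool \<Rightarrow> real"
  assumes nonneg: "\<And>x1 x2. 0 \<le> p x1 x2"
begin

lemma mass_eq_0_iff: "mass p = 0 \<longleftrightarrow> (\<forall>x1 x2. p x1 x2 = 0)"
  using nonneg by (simp add: mass_def sum_nonneg_eq_0_iff sum_nonneg)

lemma ent_X1_cond_X2_eq_0_iff:
  "ent_X1_cond_X2 p = 0 \<longleftrightarrow> (\<forall>x2. p True x2 = 0 \<or> p False x2 = 0)"
  using nonneg split_entropy_nonneg split_entropy_eq_0_iff
  by (simp add: ent_X1_cond_X2_def UNIV_bool all_bool_eq add_nonneg_eq_0_iff) blast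

lemma ent_X1_cond_X2_eq_mass_iff:
  "ent_X1_cond_X2 p = mass p \<longleftrightarrow> (\<forall>x2. p True x2 = p False x2)"
proof -
  have le: "split_entropy (p True x2) (p False x2) \<le> p True x2 + p False x2" for x2
    by (simp add: split_entropy_le nonneg)
  have "ent_X1_cond_X2 p = mass p \<longleftrightarrow> (\<forall>x2. split_entropy (p True x2) (p False x2) = p True x2 + p False x2)"
    using le[of True] le[of False] unfolding ent_X1_cond_X2_def mass_def
    by (simp add: UNIV_bool all_bool_eq) arith
  also have "\<dots> \<longleftrightarrow> (\<forall>x2. p True x2 = p False x2)"
    using nonneg by (simp add: split_entropy_eq_sum_iff)
  finally show ?thesis .
qed

lemma ent_X2_cond_X1_eq_0_iff:
  "ent_X2_cond_X1 p = 0 \<longleftrightarrow> (\<forall>x1. p x1 True = 0 \<or> p x1 False = 0)"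
  using nonneg split_entropy_nonneg split_entropy_eq_0_iff
  by (simp add: ent_X2_cond_X1_def UNIV_bool all_bool_eq add_nonneg_eq_0_iff) blast

lemma ent_X2_cond_X1_eq_mass_iff:
  "ent_X2_cond_X1 p = mass p \<longleftrightarrow> (\<forall>x1. p x1 True = p x1 False)"
proof -
  have le: "split_entropy (p x1 True) (p x1 False) \<le> p x1 True + p x1 False" for x1
    by (simp add: split_entropy_le nonneg)
  have "ent_X2_cond_X1 p = mass p \<longleftrightarrow> (\<forall>x1. split_entropy (p x1 True) (p x1 False) = p x1 True + p x1 False)"
    using le[of True] le[of False] unfolding ent_X2_cond_X1_def mass_def
    by (simp add: UNIV_bool all_bool_eq) arith
  also have "\<dots> \<longleftrightarrow> (\<forall>x1. p x1 True = p x1 False)"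
    using nonneg by (simp add: split_entropy_eq_sum_iff)
  finally show ?thesis .
qed

lemma ent_X1_eq_0_iff: "ent_X1 p = 0 \<longleftrightarrow> (\<forall>x2. p True x2 = 0) \<or> (\<forall>x2. p False x2 = 0)"
  using nonneg by (simp add: ent_X1_bool split_entropy_eq_0_iff add_nonneg_eq_0_iff all_bool_eq)

lemma ent_X1_eq_mass_iff: "ent_X1 p = mass p \<longleftrightarrow> p True True + p True False = p False True + p False False"
  using nonneg split_entropy_eq_sum_iff[of "p True True + p True False" "p False True + p False False"]
  by (simp add: ent_X1_bool mass_bool ac_simps)

lemma ent_X2_eq_0_iff: "ent_X2 p = 0 \<longleftrightarrow> (\<forall>x1. p x1 True = 0) \<or> (\<forall>x1. p x1 False = 0)"
  using nonneg by (simp add: ent_X2_bool split_entropy_eq_0_iff add_nonneg_eq_0_iff all_bool_eq)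

lemma ent_X2_eq_mass_iff: "ent_X2 p = mass p \<longleftrightarrow> p True True + p False True = p True False + p False False"
  using nonneg split_entropy_eq_sum_iff[of "p True True + p False True" "p True False + p False False"]
  by (simp add: ent_X2_bool mass_bool ac_simps)

lemma ent_X1_plus_X2_eq_0_iff:
  "ent_X1_plus_X2 p = 0 \<longleftrightarrow>
    p True False = 0 \<and> p False True = 0 \<or> p True True = 0 \<and> p False False = 0"
  using nonneg by (simp add: ent_X1_plus_X2_def split_entropy_eq_0_iff add_nonneg_eq_0_iff)

lemma ent_X1_plus_X2_eq_mass_iff:
  "ent_X1_plus_X2 p = mass p \<longleftrightarrow> p True False + p False True = p True True + p False False"
  using nonneg split_entropy_eq_sum_iff[of "p True False + p False True" "p True True + p False False"]
  by (simp add: ent_X1_plus_X2_def mass_bool ac_simps)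

lemma extremal_cond_imp_ent_X1_plus_X2:
  assumes "vA \<in> {0, 1}" "vB \<in> {0, 1}"
    and "ent_X1_cond_X2 p = vA * mass p" "ent_X2_cond_X1 p = vB * mass p"
  shows "ent_X1_plus_X2 p = max vA vB * mass p"
  using assms nonneg[of True True] nonneg[of True False] nonneg[of False True] nonneg[of False False]
  by (auto simp: ent_X1_cond_X2_eq_0_iff ent_X1_cond_X2_eq_mass_iff ent_X2_cond_X1_eq_0_iff
      ent_X2_cond_X1_eq_mass_iff ent_X1_plus_X2_eq_0_iff ent_X1_plus_X2_eq_mass_iff all_bool_eq)

(* The first conclusion: an output that determines two of X1, X2, X1 + X2 determines the third. *)
lemma extremal_J_imp_ent_cond:
  assumes "vR \<in> {0, 1}" "vC \<in> {0, 1}" "vD \<in> {0, 1}"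
    and "ent_X1 p = vR * mass p" "ent_X2 p = vC * mass p" "ent_X1_plus_X2 p = vD * mass p"
  shows "mass p = 0 \<or> vR + vC + vD \<noteq> 1"
    and "ent_X1_cond_X2 p = vR * vD * mass p" "ent_X2_cond_X1 p = vC * vD * mass p"
  using assms nonneg[of True True] nonneg[of True False] nonneg[of False True] nonneg[of False False]
  by (auto simp: ent_X1_cond_X2_eq_0_iff ent_X1_cond_X2_eq_mass_iff ent_X2_cond_X1_eq_0_iff
      ent_X2_cond_X1_eq_mass_iff ent_X1_eq_0_iff ent_X1_eq_mass_iff ent_X2_eq_0_iff ent_X2_eq_mass_iff
      ent_X1_plus_X2_eq_0_iff ent_X1_plus_X2_eq_mass_iff all_bool_eq mass_eq_0_iff)

end

lemma ent_bounds:
  fixes p :: "bool \<Rightarrow> bool \<Rightarrow> real"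
  assumes nonneg: "\<And>x1 x2. 0 \<le> p x1 x2"
  shows "0 \<le> ent_X1_cond_X2 p \<and> ent_X1_cond_X2 p \<le> mass p"
    and "0 \<le> ent_X2_cond_X1 p \<and> ent_X2_cond_X1 p \<le> mass p"
    and "0 \<le> ent_X1 p \<and> ent_X1 p \<le> mass p"
    and "0 \<le> ent_X2 p \<and> ent_X2 p \<le> mass p"
    and "0 \<le> ent_X1_plus_X2 p \<and> ent_X1_plus_X2 p \<le> mass p"
proof -
  have se: "0 \<le> split_entropy s t \<and> split_entropy s t \<le> s + t" if "0 \<le> s" "0 \<le> t" for s t
    using that by (simp add: split_entropy_nonneg split_entropy_le)
  show "0 \<le> ent_X1_cond_X2 p \<and> ent_X1_cond_X2 p \<le> mass p"
    using se[of "p True True" "p False True"] se[of "p True False" "p False False"] nonneg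
    by (simp add: ent_X1_cond_X2_def mass_bool UNIV_bool)
  show "0 \<le> ent_X2_cond_X1 p \<and> ent_X2_cond_X1 p \<le> mass p"
    using se[of "p True True" "p True False"] se[of "p False True" "p False False"] nonneg
    by (simp add: ent_X2_cond_X1_def mass_bool UNIV_bool)
  show "0 \<le> ent_X1 p \<and> ent_X1 p \<le> mass p"
    using se[of "p True True + p True False" "p False True + p False False"] nonneg
    by (simp add: ent_X1_bool mass_bool add_nonneg_nonneg)
  show "0 \<le> ent_X2 p \<and> ent_X2 p \<le> mass p"
    using se[of "p True True + p False True" "p True False + p False False"] nonneg
    by (simp add: ent_X2_bool mass_bool add_nonneg_nonneg)
  show "0 \<le> ent_X1_plus_X2 p \<and> ent_X1_plus_X2 p \<le> mass p"
    using se[of "p True False + p False True" "p True True + p False False"] nonneg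
    by (simp add: ent_X1_plus_X2_def mass_bool add_nonneg_nonneg)
qed

lemma sum_eq_0_or_1_iff:
  fixes q S :: "'a \<Rightarrow> real"
  assumes "finite A" and "\<And>x. x \<in> A \<Longrightarrow> 0 \<le> q x" and "\<And>x. x \<in> A \<Longrightarrow> q x \<le> S x"
    and "sum S A = 1" and "v \<in> {0, 1}"
  shows "sum q A = v \<longleftrightarrow> (\<forall>x\<in>A. q x = v * S x)"
proof (cases "v = 0")
  case True
  with assms(1,2) show ?thesis by (simp add: sum_nonneg_eq_0_iff)
next
  case False
  with assms(5) have "v = 1" by simp
  have "sum q A = 1 \<longleftrightarrow> sum (\<lambda>x. S x - q x) A = 0"
    using assms(4) by (auto simp: sum_subtractf)
  also have "\<dots> \<longleftrightarrow> (\<forall>x\<in>A. S x - q x = 0)"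
    using assms(1,3) by (simp add: sum_nonneg_eq_0_iff)
  finally show ?thesis using \<open>v = 1\<close> by auto
qed

context
  fixes W :: "bool \<Rightarrow> bool \<Rightarrow> 'y::finite \<Rightarrow> real"
  assumes mac: "is_binary_mac W"
begin

lemma joint_at_nonneg: "0 \<le> joint_at W y x1 x2"
  using mac by (simp add: is_binary_mac_def joint_at_def)

lemma sum_mass_joint_at: "(\<Sum>y\<in>UNIV. mass (joint_at W y)) = 1"
proof -
  have "(\<Sum>y\<in>UNIV. mass (joint_at W y)) = (\<Sum>y\<in>UNIV. W True True y / 4) + (\<Sum>y\<in>UNIV. W True False y / 4)
      + (\<Sum>y\<in>UNIV. W False True y / 4) + (\<Sum>y\<in>UNIV. W False False y / 4)"
    by (simp add: mass_bool joint_at_def sum.distrib)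
  also have "\<dots> = 1"
    using mac by (simp add: is_binary_mac_def sum_divide_distrib[symmetric])
  finally show ?thesis .
qed

lemma cond_entropy_bounds:
  assumes "\<And>p. (\<And>x1 x2. 0 \<le> p x1 x2) \<Longrightarrow> 0 \<le> h p \<and> h p \<le> mass p"
  shows "0 \<le> cond_entropy h W" and "cond_entropy h W \<le> 1"
proof -
  have "0 \<le> h (joint_at W y)" "h (joint_at W y) \<le> mass (joint_at W y)" for y
    using assms[OF joint_at_nonneg] by simp_all
  then show "0 \<le> cond_entropy h W" and "cond_entropy h W \<le> 1"
    unfolding cond_entropy_def sum_mass_joint_at[symmetric] by (simp_all add: sum_nonneg sum_mono)
qed

lemma cond_entropy_eq_0_or_1_iff:
  assumes "\<And>p. (\<And>x1 x2. 0 \<le> p x1 x2) \<Longrightarrow> 0 \<le> h p \<and> h p \<le> mass p" and "v \<in> {0, 1}"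
  shows "cond_entropy h W = v \<longleftrightarrow> (\<forall>y. h (joint_at W y) = v * mass (joint_at W y))"
  unfolding cond_entropy_def
  using sum_eq_0_or_1_iff[OF _ _ _ sum_mass_joint_at assms(2)] assms(1)[OF joint_at_nonneg] by simp

lemma cond_entropy_eq_const_mult:
  assumes "\<And>y. h (joint_at W y) = v * mass (joint_at W y)"
  shows "cond_entropy h W = v"
  using sum_mass_joint_at by (simp add: cond_entropy_def assms sum_distrib_left[symmetric])

end

(* Both sides are the contribution to H(X1, X2 | Y). *)
lemma ent_X1_add_ent_X2_cond_X1: "ent_X1 p + ent_X2_cond_X1 p = ent_X2 p + ent_X1_cond_X2 p"
  by (simp add: ent_X1_bool ent_X2_bool ent_X1_cond_X2_def ent_X2_cond_X1_def split_entropy_def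
      UNIV_bool algebra_simps)

lemma Ints_unit_interval: "(x :: real) \<in> \<int> \<Longrightarrow> 0 \<le> x \<Longrightarrow> x \<le> 1 \<Longrightarrow> x \<in> {0, 1}"
  by (elim Ints_cases) auto

(* The pairs (I, J) for (H(X1 | Y), H(X2 | Y), H(X1 + X2 | Y)) = (0,0,0), (0,1,1), (1,0,1), (1,1,0),
   (1,1,1). *)
definition extremal_IJ :: "((real \<times> real \<times> real) \<times> (real \<times> real \<times> real)) set" where
  "extremal_IJ = {((1, 1, 2), (1, 1, 1)), ((1, 0, 1), (1, 0, 0)), ((0, 1, 1), (0, 1, 0)),
                  ((1, 1, 1), (0, 0, 1)), ((0, 0, 0), (0, 0, 0))}"

context
  fixes W :: "bool \<Rightarrow> bool \<Rightarrow> 'y::finite \<Rightarrow> real"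
  assumes mac: "is_binary_mac W"
begin

lemma J_extremal_imp_extremal_IJ:
  assumes "triple_in {0, 1} (J_triple W)"
  shows "(I_triple W, J_triple W) \<in> extremal_IJ"
proof -
  define hR hC hD
    where "hR = cond_entropy ent_X1 W" and "hC = cond_entropy ent_X2 W"
      and "hD = cond_entropy ent_X1_plus_X2 W"
  have v: "hR \<in> {0, 1}" "hC \<in> {0, 1}" "hD \<in> {0, 1}"
    using assms by (auto simp: J_triple_eq[OF mac] triple_in_def hR_def hC_def hD_def)
  have "ent_X1 (joint_at W y) = hR * mass (joint_at W y)"
    and "ent_X2 (joint_at W y) = hC * mass (joint_at W y)"
    and "ent_X1_plus_X2 (joint_at W y) = hD * mass (joint_at W y)" for y
    using cond_entropy_eq_0_or_1_iff[OF mac ent_bounds(3) v(1)]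
      cond_entropy_eq_0_or_1_iff[OF mac ent_bounds(4) v(2)]
      cond_entropy_eq_0_or_1_iff[OF mac ent_bounds(5) v(3)]
    by (simp_all add: hR_def hC_def hD_def)
  note pointwise = extremal_J_imp_ent_cond[OF joint_at_nonneg[OF mac] v this]
  obtain y where "mass (joint_at W y) \<noteq> 0"
    using sum_mass_joint_at[OF mac] by (metis sum.neutral zero_neq_one)
  with pointwise(1) have "hR + hC + hD \<noteq> 1" by blast
  with v have pattern: "(hR, hC, hD) \<in> {(0, 0, 0), (0, 1, 1), (1, 0, 1), (1, 1, 0), (1, 1, 1)}"
    by auto
  have "cond_entropy ent_X1_cond_X2 W = hR * hD" "cond_entropy ent_X2_cond_X1 W = hC * hD"
    using pointwise(2,3) by (simp_all add: cond_entropy_eq_const_mult[OF mac])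
  then have I_eq: "I_triple W = (1 - hR * hD, 1 - hC * hD, 2 - hR - hC * hD)"
    and J_eq: "J_triple W = (1 - hR, 1 - hC, 1 - hD)"
    by (simp_all add: I_triple_eq[OF mac] J_triple_eq[OF mac] hR_def hC_def hD_def)
  from pattern show ?thesis
    unfolding I_eq J_eq extremal_IJ_def by (elim insertE emptyE) simp_all
qed

lemma I_integral_imp_J_extremal:
  assumes "triple_in \<int> (I_triple W)"
  shows "triple_in {0, 1} (J_triple W)"
proof -
  define hA hB hR hC hD
    where "hA = cond_entropy ent_X1_cond_X2 W" and "hB = cond_entropy ent_X2_cond_X1 W"
      and "hR = cond_entropy ent_X1 W" and "hC = cond_entropy ent_X2 W"
      and "hD = cond_entropy ent_X1_plus_X2 W"
  have bounds: "0 \<le> hA" "hA \<le> 1" "0 \<le> hB" "hB \<le> 1" "0 \<le> hR" "hR \<le> 1" "0 \<le> hC" "hC \<le> 1"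
    unfolding hA_def hB_def hR_def hC_def
    by (intro cond_entropy_bounds[OF mac] ent_bounds; assumption)+
  have int: "1 - hA \<in> \<int>" "1 - hB \<in> \<int>" "2 - hR - hB \<in> \<int>"
    using assms by (simp_all add: I_triple_eq[OF mac] triple_in_def hA_def hB_def hR_def)
  have "hA \<in> \<int>" "hB \<in> \<int>"
    using Ints_diff[OF Ints_1 int(1)] Ints_diff[OF Ints_1 int(2)] by simp_all
  then have A: "hA \<in> {0, 1}" and B: "hB \<in> {0, 1}"
    using Ints_unit_interval bounds(1-4) by blast+
  have "2 - hB - (2 - hR - hB) \<in> \<int>"
    using B int(3) by (intro Ints_diff) auto
  then have R: "hR \<in> {0, 1}"
    using Ints_unit_interval bounds(5,6) by simp
  have "hR + hB = hC + hA"
    unfolding hA_def hB_def hR_def hC_def cond_entropy_def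
    by (simp add: sum.distrib[symmetric] ent_X1_add_ent_X2_cond_X1)
  moreover have "hR + hB - hA \<in> \<int>"
    using A B R by (intro Ints_diff Ints_add) auto
  ultimately have C: "hC \<in> {0, 1}"
    using Ints_unit_interval bounds(7,8) by simp
  have "ent_X1_cond_X2 (joint_at W y) = hA * mass (joint_at W y)"
    and "ent_X2_cond_X1 (joint_at W y) = hB * mass (joint_at W y)" for y
    using cond_entropy_eq_0_or_1_iff[OF mac ent_bounds(1) A]
      cond_entropy_eq_0_or_1_iff[OF mac ent_bounds(2) B]
    by (simp_all add: hA_def hB_def)
  then have "hD = max hA hB"
    unfolding hD_def
    by (intro cond_entropy_eq_const_mult[OF mac]
        extremal_cond_imp_ent_X1_plus_X2[OF joint_at_nonneg[OF mac] A B])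
  with A B R C have "1 - hR \<in> {0, 1}" "1 - hC \<in> {0, 1}" "1 - hD \<in> {0, 1}"
    by auto
  then show ?thesis
    by (simp add: J_triple_eq[OF mac] triple_in_def hR_def hC_def hD_def)
qed

lemma mac_extremal_IJ:
  assumes "triple_in \<int> (I_triple W) \<or> triple_in {0, 1} (J_triple W)"
  shows "(I_triple W, J_triple W) \<in> extremal_IJ"
  using assms I_integral_imp_J_extremal J_extremal_imp_extremal_IJ by blast

end

theorem mainTheorem4:
  fixes W :: "bool \<Rightarrow> bool \<Rightarrow> 'y::finite \<Rightarrow> real"
    and W' :: "bool \<Rightarrow> bool \<Rightarrow> 'y2::finite \<Rightarrow> real"
  assumes "is_binary_mac W" and "is_binary_mac W'"
  shows "(triple_in \<int> (I_triple W) \<longrightarrow> triple_in {0, 1} (J_triple W))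
       \<and> (triple_in \<int> (I_triple W) \<and> I_triple W' = I_triple W \<longrightarrow> J_triple W' = J_triple W)
       \<and> (triple_in {0, 1} (J_triple W) \<longrightarrow> triple_in \<int> (I_triple W))
       \<and> (triple_in {0, 1} (J_triple W) \<and> J_triple W' = J_triple W \<longrightarrow> I_triple W' = I_triple W)"
proof -
  have table: "(I_triple W, J_triple W) \<in> extremal_IJ"
    if "triple_in \<int> (I_triple W) \<or> triple_in {0, 1} (J_triple W)"
    using mac_extremal_IJ[OF assms(1) that] .
  have table': "(I_triple W', J_triple W') \<in> extremal_IJ"
    if "triple_in \<int> (I_triple W') \<or> triple_in {0, 1} (J_triple W')"
    using mac_extremal_IJ[OF assms(2) that] .
  show ?thesis
  proof (intro conjI impI)
    assume "triple_in \<int> (I_triple W)"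
    with table show "triple_in {0, 1} (J_triple W)"
      unfolding extremal_IJ_def triple_in_def by auto
  next
    assume "triple_in \<int> (I_triple W) \<and> I_triple W' = I_triple W"
    with table table' show "J_triple W' = J_triple W"
      unfolding extremal_IJ_def by auto
  next
    assume "triple_in {0, 1} (J_triple W)"
    with table show "triple_in \<int> (I_triple W)"
      unfolding extremal_IJ_def triple_in_def by auto
  next
    assume "triple_in {0, 1} (J_triple W) \<and> J_triple W' = J_triple W"
    with table table' show "I_triple W' = I_triple W"
      unfolding extremal_IJ_def by auto
  qed
qed

end
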